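(* Let $(\alpha_k)_{k\ge1}$ be a uniformly bounded sequence of positive reals, $\gamma_k:=\sum_{j=1}^k\frac1{\alpha_j}$ ($\gamma_0:=0$), let $\kappa>0$ and $\tau>0$ be constants, and for $\delta\ge0$, $k\ge1$ define $$e_k^n:=\delta^2\sum_{i=1}^k\Big(\frac{1}{\alpha_i^2}+\gamma_{i-1}^2\Big),\qquad e_k^r:=1+\sum_{i=1}^k\alpha_i^{-1}\gamma_i^{-\kappa}.$$ Define $k(\delta):=0$ if $e_1^n>\tau e_1^r$, and otherwise $k(\delta):=\max\{k\in\mathbb{N}:\ e_i^n\le\tau e_i^r\ \text{for all } i\le k\}$. Then for every $\delta>0$, $k(\delta)$ is well-defined and unique (in particular the maximum exists and is finite), and $k(\delta)\to\infty$ as $\delta\to0$.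
   Context: In the paper $\kappa$ is the exponent from an active set condition on a solution of the underlying optimization problem; for this statement only $\kappa>0$ matters. $\mathbb{N}=\{1,2,\dots\}$. *)

theory Defs
  imports Complex_Main
begin

text \<open>The sequence alpha is indexed from 1; the value alpha 0 is irrelevant.\<close>

definition gam :: "(nat \<Rightarrow> real) \<Rightarrow> nat \<Rightarrow> real" where
  "gam \<alpha> k = (\<Sum>j=1..k. 1 / \<alpha> j)"

definition e_n :: "(nat \<Rightarrow> real) \<Rightarrow> real \<Rightarrow> nat \<Rightarrow> real" where
  "e_n \<alpha> \<delta> k = \<delta>^2 * (\<Sum>i=1..k. 1 / (\<alpha> i)^2 + (gam \<alpha> (i - 1))^2)"

definition e_r :: "(nat \<Rightarrow> real) \<Rightarrow> real \<Rightarrow> nat \<Rightarrow> real" where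
  "e_r \<alpha> \<kappa> k = 1 + (\<Sum>i=1..k. (1 / \<alpha> i) * (gam \<alpha> i) powr (- \<kappa>))"

definition stop_set :: "(nat \<Rightarrow> real) \<Rightarrow> real \<Rightarrow> real \<Rightarrow> real \<Rightarrow> nat set" where
  "stop_set \<alpha> \<kappa> \<tau> \<delta> =
     {k. k \<ge> 1 \<and> (\<forall>i\<in>{1..k}. e_n \<alpha> \<delta> i \<le> \<tau> * e_r \<alpha> \<kappa> i)}"

definition kdelta :: "(nat \<Rightarrow> real) \<Rightarrow> real \<Rightarrow> real \<Rightarrow> real \<Rightarrow> nat" where
  "kdelta \<alpha> \<kappa> \<tau> \<delta> =
     (if e_n \<alpha> \<delta> 1 > \<tau> * e_r \<alpha> \<kappa> 1 then 0 else Max (stop_set \<alpha> \<kappa> \<tau> \<delta>))"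

end

theory Submission
  imports Defs
begin

text \<open>Bounded \<open>\<alpha>\<^sub>k \<le> M\<close> make \<open>\<gamma>\<^sub>k \<ge> k/M\<close> grow linearly. For fixed \<open>\<delta> > 0\<close> the term \<open>e\<^sub>k\<^sup>n\<close>
  dominates \<open>\<delta>\<^sup>2\<gamma>\<^sub>k\<^sup>2/2\<close>, quadratic in \<open>\<gamma>\<^sub>k\<close>, whereas \<open>\<gamma>\<^sub>i \<ge> \<gamma>\<^sub>1\<close> bounds \<open>e\<^sub>k\<^sup>r\<close> by the linear
  \<open>1 + \<gamma>\<^sub>1\<^sup>-\<^sup>\<kappa>\<gamma>\<^sub>k\<close>; so the admissibility condition fails for some \<open>k\<close> and \<open>k(\<delta>)\<close> is a
  maximum over a finite set. For fixed \<open>k\<close>, \<open>e\<^sub>k\<^sup>n = O(\<delta>\<^sup>2)\<close> while \<open>e\<^sub>k\<^sup>r \<ge> 1\<close>, so every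
  initial segment \<open>1..N\<close> is admissible for small \<open>\<delta>\<close>, giving \<open>k(\<delta>) \<ge> N\<close>.\<close>

lemma gam_Suc: "gam \<alpha> (Suc k) = gam \<alpha> k + 1 / \<alpha> (Suc k)"
  unfolding gam_def by simp

lemma gam_mono:
  assumes pos: "\<And>k. k \<ge> 1 \<Longrightarrow> \<alpha> k > 0" and "i \<le> j"
  shows "gam \<alpha> i \<le> gam \<alpha> j"
  unfolding gam_def
proof (rule sum_mono2)
  fix b assume "b \<in> {1..j} - {1..i}"
  then show "0 \<le> 1 / \<alpha> b" using pos[of b] by simp
qed (use assms(2) in auto)

lemma gam_ge_linear:
  assumes pos: "\<And>k. k \<ge> 1 \<Longrightarrow> \<alpha> k > 0" and bound: "\<forall>k\<ge>1. \<alpha> k \<le> M"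
  shows "real k / M \<le> gam \<alpha> k"
proof (induction k)
  case (Suc k)
  have "1 / M \<le> 1 / \<alpha> (Suc k)"
    using pos[of "Suc k"] bound by (simp add: frac_le)
  with Suc show ?case by (simp add: gam_Suc add_divide_distrib)
qed (simp add: gam_def)

lemma e_n_ge_half_gam_sq:
  assumes "k \<ge> 1"
  shows "\<delta>^2 * (gam \<alpha> k)^2 / 2 \<le> e_n \<alpha> \<delta> k"
proof -
  let ?t = "\<lambda>i. 1 / (\<alpha> i)^2 + (gam \<alpha> (i - 1))^2"
  obtain m where k: "k = Suc m" using assms by (cases k) auto
  have "(gam \<alpha> m + 1 / \<alpha> k)^2 \<le> 2 * ((1 / \<alpha> k)^2 + (gam \<alpha> m)^2)"
    using zero_le_power2[of "gam \<alpha> m - 1 / \<alpha> k"]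
    by (simp add: power2_eq_square algebra_simps)
  then have "(gam \<alpha> k)^2 / 2 \<le> ?t k"
    by (simp add: k gam_Suc power_one_over)
  also have "?t k \<le> (\<Sum>i=1..k. ?t i)"
    using assms by (intro member_le_sum) auto
  finally have "\<delta>^2 * ((gam \<alpha> k)^2 / 2) \<le> \<delta>^2 * (\<Sum>i=1..k. ?t i)"
    by (intro mult_left_mono) auto
  then show ?thesis unfolding e_n_def by simp
qed

lemma e_r_le_linear:
  assumes pos: "\<And>k. k \<ge> 1 \<Longrightarrow> \<alpha> k > 0" and kappa: "\<kappa> > 0"
  shows "e_r \<alpha> \<kappa> k \<le> 1 + gam \<alpha> 1 powr (-\<kappa>) * gam \<alpha> k"
proof -
  have "(1 / \<alpha> i) * gam \<alpha> i powr (-\<kappa>) \<le> gam \<alpha> 1 powr (-\<kappa>) * (1 / \<alpha> i)"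
    if i: "i \<in> {1..k}" for i
  proof -
    have "gam \<alpha> i powr (-\<kappa>) \<le> gam \<alpha> 1 powr (-\<kappa>)"
      using i pos[of 1] kappa gam_mono[OF pos, where i = 1 and j = i]
      by (intro powr_mono2') (auto simp: gam_def)
    moreover have "0 \<le> 1 / \<alpha> i" using pos[of i] i by simp
    ultimately show ?thesis by (simp add: divide_right_mono)
  qed
  then have "(\<Sum>i=1..k. (1 / \<alpha> i) * gam \<alpha> i powr (-\<kappa>))
      \<le> (\<Sum>i=1..k. gam \<alpha> 1 powr (-\<kappa>) * (1 / \<alpha> i))"
    by (rule sum_mono)
  then show ?thesis unfolding e_r_def by (simp add: gam_def sum_distrib_left)
qed

lemma e_r_ge_1:
  assumes pos: "\<And>k. k \<ge> 1 \<Longrightarrow> \<alpha> k > 0"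
  shows "1 \<le> e_r \<alpha> \<kappa> k"
  unfolding e_r_def using pos by (auto intro!: sum_nonneg simp: less_imp_le)

lemma exists_e_n_gt_e_r:
  assumes pos: "\<And>k. k \<ge> 1 \<Longrightarrow> \<alpha> k > 0" and bound: "\<forall>k\<ge>1. \<alpha> k \<le> M"
    and kappa: "\<kappa> > 0" and tau: "\<tau> > 0" and delta: "\<delta> > 0"
  obtains K where "K \<ge> 1" and "\<tau> * e_r \<alpha> \<kappa> K < e_n \<alpha> \<delta> K"
proof -
  have M: "M > 0" using pos[of 1] bound by force
  define C where "C = gam \<alpha> 1 powr (-\<kappa>)"
  have C: "C \<ge> 0" unfolding C_def by simp
  \<comment> \<open>\<open>X\<close> is chosen so that \<open>\<delta>\<^sup>2X/2 > \<tau>(1 + C)\<close>; any \<open>K\<close> with \<open>\<gamma>\<^sub>K \<ge> X\<close> then violates admissibility.\<close>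
  define X where "X = 1 + 2 * (\<tau> + \<tau> * C) / \<delta>^2"
  have X: "X \<ge> 1" unfolding X_def using tau C delta by simp
  define K where "K = nat \<lceil>M * X\<rceil> + 1"
  have K: "K \<ge> 1" unfolding K_def by simp
  let ?g = "gam \<alpha> K"
  have "X \<le> real K / M" using M unfolding K_def by (simp add: field_simps) linarith
  then have gX: "X \<le> ?g" using gam_ge_linear[OF pos bound, where k = K] by linarith
  have "\<tau> * e_r \<alpha> \<kappa> K \<le> \<tau> * (1 + C * ?g)"
    using e_r_le_linear[OF pos kappa, where k = K] tau unfolding C_def by simp
  also have "\<dots> \<le> (\<tau> + \<tau> * C) * ?g"
    using gX X tau C by (simp add: algebra_simps)
  also have "\<dots> < \<delta>^2 * X / 2 * ?g"
  proof -
    have "\<delta>^2 * X / 2 = \<delta>^2 / 2 + (\<tau> + \<tau> * C)"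
      unfolding X_def using delta by (simp add: field_simps)
    then show ?thesis using gX X delta by (intro mult_strict_right_mono) auto
  qed
  also have "\<dots> \<le> \<delta>^2 * ?g / 2 * ?g"
    using gX X by (intro mult_right_mono divide_right_mono mult_left_mono) auto
  also have "\<dots> \<le> e_n \<alpha> \<delta> K"
    using e_n_ge_half_gam_sq[OF K, of \<delta> \<alpha>] by (simp add: power2_eq_square)
  finally show ?thesis using that K by simp
qed

lemma finite_stop_set:
  assumes pos: "\<And>k. k \<ge> 1 \<Longrightarrow> \<alpha> k > 0" and bound: "\<forall>k\<ge>1. \<alpha> k \<le> M"
    and kappa: "\<kappa> > 0" and tau: "\<tau> > 0" and delta: "\<delta> > 0"
  shows "finite (stop_set \<alpha> \<kappa> \<tau> \<delta>)"
proof -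
  obtain K where K: "K \<ge> 1" "\<tau> * e_r \<alpha> \<kappa> K < e_n \<alpha> \<delta> K"
    using exists_e_n_gt_e_r[OF assms] .
  have "stop_set \<alpha> \<kappa> \<tau> \<delta> \<subseteq> {..<K}"
    using K by (force simp: stop_set_def not_less)
  then show ?thesis by (rule finite_subset) simp
qed

lemma e_n_tendsto_0: "((\<lambda>\<delta>. e_n \<alpha> \<delta> k) \<longlongrightarrow> 0) (at_right 0)"
proof -
  have "((\<lambda>\<delta>::real. \<delta>^2 * c) \<longlongrightarrow> 0^2 * c) (at_right 0)" for c
    by (intro tendsto_intros)
  then show ?thesis unfolding e_n_def by simp
qed

lemma eventually_initial_segment_admissible:
  assumes pos: "\<And>k. k \<ge> 1 \<Longrightarrow> \<alpha> k > 0" and tau: "\<tau> > 0"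
  shows "eventually (\<lambda>\<delta>. \<forall>i\<in>{1..N}. e_n \<alpha> \<delta> i \<le> \<tau> * e_r \<alpha> \<kappa> i) (at_right 0)"
proof -
  have "eventually (\<lambda>\<delta>. e_n \<alpha> \<delta> i < \<tau>) (at_right 0)" for i
    using order_tendstoD(2)[OF e_n_tendsto_0 tau] .
  then have "eventually (\<lambda>\<delta>. \<forall>i\<in>{1..N}. e_n \<alpha> \<delta> i < \<tau>) (at_right 0)"
    by (simp add: eventually_ball_finite)
  moreover have "\<tau> \<le> \<tau> * e_r \<alpha> \<kappa> i" for i
    using e_r_ge_1[OF pos] tau by simp
  ultimately show ?thesis
    by (elim eventually_mono) (meson less_le_trans less_imp_le)
qed

lemma le_kdelta:
  assumes fin: "finite (stop_set \<alpha> \<kappa> \<tau> \<delta>)" and "N \<ge> 1"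
    and admissible: "\<forall>i\<in>{1..N}. e_n \<alpha> \<delta> i \<le> \<tau> * e_r \<alpha> \<kappa> i"
  shows "N \<le> kdelta \<alpha> \<kappa> \<tau> \<delta>"
proof -
  have "N \<in> stop_set \<alpha> \<kappa> \<tau> \<delta>" using assms by (simp add: stop_set_def)
  moreover have "\<not> e_n \<alpha> \<delta> 1 > \<tau> * e_r \<alpha> \<kappa> 1" using admissible \<open>N \<ge> 1\<close> by force
  ultimately show ?thesis unfolding kdelta_def using fin by simp
qed

theorem mainTheorem2:
  fixes \<alpha> :: "nat \<Rightarrow> real" and \<kappa> \<tau> :: real
  assumes pos: "\<And>k. k \<ge> 1 \<Longrightarrow> \<alpha> k > 0"
    and bdd: "\<exists>M. \<forall>k\<ge>1. \<alpha> k \<le> M"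
    and kappa: "\<kappa> > 0" and tau: "\<tau> > 0"
  shows "(\<forall>\<delta>>0. \<not> (e_n \<alpha> \<delta> 1 > \<tau> * e_r \<alpha> \<kappa> 1) \<longrightarrow>
            (\<exists>k\<in>stop_set \<alpha> \<kappa> \<tau> \<delta>. \<forall>j\<in>stop_set \<alpha> \<kappa> \<tau> \<delta>. j \<le> k))
         \<and> filterlim (kdelta \<alpha> \<kappa> \<tau>) at_top (at_right 0)"
proof
  obtain M where M: "\<forall>k\<ge>1. \<alpha> k \<le> M" using bdd by blast
  note fin = finite_stop_set[OF pos M kappa tau]
  show "\<forall>\<delta>>0. \<not> (e_n \<alpha> \<delta> 1 > \<tau> * e_r \<alpha> \<kappa> 1) \<longrightarrow>
          (\<exists>k\<in>stop_set \<alpha> \<kappa> \<tau> \<delta>. \<forall>j\<in>stop_set \<alpha> \<kappa> \<tau> \<delta>. j \<le> k)"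
  proof (intro allI impI)
    fix \<delta> :: real assume "\<delta> > 0" and "\<not> e_n \<alpha> \<delta> 1 > \<tau> * e_r \<alpha> \<kappa> 1"
    then have "finite (stop_set \<alpha> \<kappa> \<tau> \<delta>)" and "1 \<in> stop_set \<alpha> \<kappa> \<tau> \<delta>"
      using fin by (auto simp: stop_set_def)
    then show "\<exists>k\<in>stop_set \<alpha> \<kappa> \<tau> \<delta>. \<forall>j\<in>stop_set \<alpha> \<kappa> \<tau> \<delta>. j \<le> k"
      by (metis Max_ge Max_in empty_iff)
  qed
  show "filterlim (kdelta \<alpha> \<kappa> \<tau>) at_top (at_right 0)"
    unfolding filterlim_at_top
  proof
    fix Z :: nat
    have "eventually (\<lambda>\<delta>. \<forall>i\<in>{1..max Z 1}. e_n \<alpha> \<delta> i \<le> \<tau> * e_r \<alpha> \<kappa> i) (at_right 0)"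
      by (rule eventually_initial_segment_admissible[OF pos tau])
    moreover have "eventually (\<lambda>\<delta>. \<delta> > 0) (at_right (0::real))"
      by (simp add: eventually_at_right_less)
    ultimately have "eventually (\<lambda>\<delta>. max Z 1 \<le> kdelta \<alpha> \<kappa> \<tau> \<delta>) (at_right 0)"
      by eventually_elim (intro le_kdelta fin; simp)
    then show "eventually (\<lambda>\<delta>. Z \<le> kdelta \<alpha> \<kappa> \<tau> \<delta>) (at_right 0)"
      by (elim eventually_mono) simp
  qed
qed

end
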